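(* Let $0<\rho\le\infty$ and let $f(z)=\sum_{k\ge0}c_kz^k$ be a power series with real coefficients convergent on $D(0,\rho)$. Fix an integer $N\ge1$. If $f[A]$ is positive semidefinite for every $A\in\mathbb{P}^1_N((0,\rho))$, then the first $N$ non-zero Taylor coefficients $c_j$ of $f$ (or all of the non-zero ones, if there are fewer than $N$) are strictly positive.
   Context: $\mathbb{P}^1_N(I)$ is the set of $N\times N$ positive semidefinite matrices of rank at most one with all entries in $I$. $D(0,\rho)$ is the open disc of radius $\rho$ about $0$. For a matrix $A=(a_{jk})$, $f[A]:=(f(a_{jk}))$. *)

theory Defs
  imports "HOL-Analysis.Analysis"
begin

definition psd :: "real^'n^'n \<Rightarrow> bool" where
  "psd A \<longleftrightarrow> transpose A = A \<and> (\<forall>v. 0 \<le> v \<bullet> (A *v v))"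

text \<open>The set P^1_N(I): PSD matrices of rank at most one with all entries in I
  (N = CARD('n)).\<close>
definition P1 :: "real set \<Rightarrow> (real^'n^'n) set" where
  "P1 I = {A. psd A \<and> rank A \<le> 1 \<and> (\<forall>i j. A $ i $ j \<in> I)}"

definition entrywise :: "(real \<Rightarrow> real) \<Rightarrow> real^'n^'m \<Rightarrow> real^'n^'m" where
  "entrywise f A = (\<chi> i j. f (A $ i $ j))"

end

theory Submission
  imports Defs "HOL-Computational_Algebra.Polynomial"
begin

text \<open>Let \<open>w = (x\<^sup>0, x\<^sup>1, \<dots>, x\<^sup>N\<^sup>-\<^sup>1)\<close> with \<open>0 < x < 1\<close> and \<open>t > 0\<close> small. The
  rank-one matrix \<open>t w w\<^sup>T\<close> lies in \<open>\<P>\<^sup>1\<^sub>N((0,\<rho>))\<close>, and for any vector \<open>v\<close>, read as the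
  coefficients of a polynomial \<open>p\<close> of degree \<open>< N\<close>,
  \<open>v\<^sup>T f[t w w\<^sup>T] v = \<Sum>\<^sub>k c\<^sub>k p(x\<^sup>k)\<^sup>2 t\<^sup>k \<ge> 0\<close>.
  Choosing \<open>p\<close> to vanish at the nodes \<open>x\<^sup>k\<close> of the fewer than \<open>N\<close> non-zero coefficients
  preceding \<open>c\<^sub>j\<close>, but not at \<open>x\<^sup>j\<close>, makes \<open>c\<^sub>j p(x\<^sup>j)\<^sup>2\<close> the lowest coefficient of a
  power series that is non-negative on \<open>(0, \<epsilon>)\<close>; hence it is non-negative.\<close>

lemma powser_lowest_coeff_nonneg:
  fixes b :: "nat \<Rightarrow> real"
  assumes K: "0 < K" "summable (\<lambda>k. b k * K ^ k)"
    and below: "\<And>k. k < j \<Longrightarrow> b k = 0"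
    and nonneg: "\<forall>\<^sub>F t in at_right 0. 0 \<le> (\<Sum>k. b k * t ^ k)"
  shows "0 \<le> b j"
proof -
  define h where "h t = (\<Sum>k. b (k + j) * t ^ k)" for t :: real
  have "summable (\<lambda>k. b (k + j) * K ^ (k + j))"
    using summable_ignore_initial_segment[OF K(2), of j] by simp
  hence "summable (\<lambda>k. b (k + j) * K ^ (k + j) / K ^ j)"
    by (rule summable_divide)
  moreover have "b (k + j) * K ^ (k + j) / K ^ j = b (k + j) * K ^ k" for k
    using K(1) by (simp add: power_add)
  ultimately have shifted: "summable (\<lambda>k. b (k + j) * K ^ k)" by simp
  have "isCont h 0"
    unfolding h_def by (rule isCont_powser[OF shifted]) (use K in simp)
  hence "(h \<longlongrightarrow> h 0) (at_right 0)"
    by (simp add: isCont_def filterlim_at_split)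
  moreover have h_nonneg: "0 \<le> h t" if t: "0 < t" "t < K" "0 \<le> (\<Sum>k. b k * t ^ k)" for t
  proof -
    have "(\<lambda>k. b (k + j) * t ^ k) sums h t"
      unfolding h_def using t K by (intro summable_sums powser_inside[OF shifted]) simp
    hence "(\<lambda>k. t ^ j * (b (k + j) * t ^ k)) sums (t ^ j * h t)"
      by (rule sums_mult)
    hence "(\<lambda>k. b (k + j) * t ^ (k + j)) sums (t ^ j * h t)"
      by (simp add: power_add algebra_simps)
    moreover have "(\<Sum>k<j. b k * t ^ k) = 0"
      using below by simp
    ultimately have "(\<lambda>k. b k * t ^ k) sums (t ^ j * h t)"
      using sums_iff_shift[of "\<lambda>k. b k * t ^ k" j] by simp
    with t(3) have "0 \<le> t ^ j * h t" by (simp add: sums_unique[symmetric])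
    thus ?thesis using zero_less_power[OF t(1), of j] by (simp add: zero_le_mult_iff)
  qed
  have "\<forall>\<^sub>F t in at_right 0. t < K"
    using K(1) by (intro eventually_at_rightI[of 0 K]) auto
  with eventually_at_right_less nonneg have "\<forall>\<^sub>F t in at_right 0. 0 \<le> h t"
    by eventually_elim (rule h_nonneg)
  ultimately have "0 \<le> h 0"
    by (rule tendsto_lowerbound) simp
  thus ?thesis
    using powser_zero[of "\<lambda>k. b (k + j)"] by (simp add: h_def)
qed

lemma poly_eq_sum_bij_index:
  fixes p :: "'a::comm_semiring_1 poly"
  assumes "bij_betw e A {..<n}" "degree p < n"
  shows "poly p y = (\<Sum>i\<in>A. coeff p (e i) * y ^ e i)"
proof -
  have "poly p y = (\<Sum>d\<le>degree p. coeff p d * y ^ d)" by (rule poly_altdef)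
  also have "\<dots> = (\<Sum>d<n. coeff p d * y ^ d)"
    by (rule sum.mono_neutral_left) (use assms(2) in \<open>auto simp: coeff_eq_0\<close>)
  also have "\<dots> = (\<Sum>i\<in>A. coeff p (e i) * y ^ e i)"
    by (rule sum.reindex_bij_betw[OF assms(1), symmetric])
  finally show ?thesis .
qed

lemma abs_poly_le_sum_abs_coeff:
  fixes p :: "real poly"
  assumes "\<bar>y\<bar> \<le> 1"
  shows "\<bar>poly p y\<bar> \<le> (\<Sum>d\<le>degree p. \<bar>coeff p d\<bar>)"
proof -
  have "\<bar>poly p y\<bar> \<le> (\<Sum>d\<le>degree p. \<bar>coeff p d * y ^ d\<bar>)"
    unfolding poly_altdef by (rule sum_abs)
  also have "\<dots> \<le> (\<Sum>d\<le>degree p. \<bar>coeff p d\<bar>)"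
    using assms by (intro sum_mono) (simp add: abs_mult power_abs mult_left_le power_le_one)
  finally show ?thesis .
qed

lemma exists_poly_vanishing_on_nonzero_at:
  fixes Z :: "'a::idom set"
  assumes "finite Z" "y \<notin> Z"
  shows "\<exists>p. degree p = card Z \<and> (\<forall>z\<in>Z. poly p z = 0) \<and> poly p y \<noteq> 0"
proof (intro exI conjI)
  let ?p = "\<Prod>z\<in>Z. [:-z, 1:]"
  show "degree ?p = card Z"
    by (subst degree_prod_eq_sum_degree) auto
  show "\<forall>z\<in>Z. poly ?p z = 0"
    using assms(1) by (auto simp: poly_prod)
  show "poly ?p y \<noteq> 0"
    using assms by (auto simp: poly_prod)
qed

lemma P1_mono: "I \<subseteq> J \<Longrightarrow> P1 I \<subseteq> P1 J"
  by (auto simp: P1_def)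

lemma scaled_outer_in_P1:
  fixes w :: "real^'n"
  assumes "0 \<le> t" "\<And>i j. t * w$i * w$j \<in> I"
  shows "(\<chi> i j. t * w$i * w$j) \<in> P1 I"
proof -
  let ?A = "(\<chi> i j. t * w$i * w$j) :: real^'n^'n"
  have Av: "?A *v v = (t * (w \<bullet> v)) *\<^sub>R w" for v
    by (simp add: matrix_vector_mult_def inner_vec_def vec_eq_iff sum_distrib_left
        sum_distrib_right algebra_simps)
  have "psd ?A"
    unfolding psd_def
  proof
    show "transpose ?A = ?A" by (simp add: transpose_def vec_eq_iff algebra_simps)
    have "v \<bullet> (?A *v v) = t * ((w \<bullet> v) * (w \<bullet> v))" for v
      by (simp add: Av inner_commute)
    thus "\<forall>v. 0 \<le> v \<bullet> (?A *v v)"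
      using assms(1) by simp
  qed
  moreover have "rank ?A \<le> 1"
  proof -
    have "range (\<lambda>v. ?A *v v) \<subseteq> span {w}"
      by (auto simp: Av intro: span_mul span_base)
    hence "dim (range (\<lambda>v. ?A *v v)) \<le> card {w}"
      by (intro dim_le_card) auto
    thus ?thesis by (simp add: rank_dim_range)
  qed
  ultimately show ?thesis using assms(2) by (simp add: P1_def)
qed

lemma entrywise_powser_scaled_outer_quadratic_form:
  fixes v w :: "real^'n" and c :: "nat \<Rightarrow> real"
  assumes "\<And>i l. summable (\<lambda>k. c k * (t * w$i * w$l) ^ k)"
  shows "(\<lambda>k. c k * t ^ k * (\<Sum>i\<in>UNIV. v$i * w$i ^ k)\<^sup>2) sums
     (v \<bullet> (entrywise (\<lambda>x. \<Sum>k. c k * x ^ k) (\<chi> i l. t * w$i * w$l) *v v))"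
proof -
  have "(\<lambda>k. \<Sum>i\<in>UNIV. \<Sum>l\<in>UNIV. v$i * v$l * (c k * (t * w$i * w$l) ^ k)) sums
      (\<Sum>i\<in>UNIV. \<Sum>l\<in>UNIV. v$i * v$l * (\<Sum>k. c k * (t * w$i * w$l) ^ k))"
    by (intro sums_sum sums_mult summable_sums assms)
  moreover have "(\<Sum>i\<in>UNIV. \<Sum>l\<in>UNIV. v$i * v$l * (c k * (t * w$i * w$l) ^ k))
       = c k * t ^ k * (\<Sum>i\<in>UNIV. v$i * w$i ^ k)\<^sup>2" for k
    by (simp add: power2_eq_square sum_product sum_distrib_left power_mult_distrib algebra_simps)
  ultimately show ?thesis
    by (simp add: entrywise_def matrix_vector_mult_def inner_vec_def sum_distrib_left algebra_simps)
qed

lemma psd_entrywise_powser_imp_poly_weighted_powser_nonneg: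
  fixes c :: "nat \<Rightarrow> real" and p :: "real poly"
  assumes R: "summable (\<lambda>k. c k * R ^ k)"
    and psd: "\<And>A::real^'n^'n. A \<in> P1 {s. 0 < s \<and> s < R} \<Longrightarrow>
           psd (entrywise (\<lambda>s. \<Sum>k. c k * s ^ k) A)"
    and deg: "degree p < CARD('n)"
    and x: "0 < x" "x \<le> 1"
    and t: "0 < t" "t < R"
  shows "0 \<le> (\<Sum>k. c k * (poly p (x ^ k))\<^sup>2 * t ^ k)"
proof -
  obtain e where e: "bij_betw e (UNIV::'n set) {..<CARD('n)}"
    using ex_bij_betw_finite_nat[of "UNIV::'n set"] by (auto simp: atLeast0LessThan)
  define w :: "real^'n" where "w = (\<chi> i. x ^ e i)"
  define v :: "real^'n" where "v = (\<chi> i. coeff p (e i))"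
  let ?A = "(\<chi> i l. t * w$i * w$l) :: real^'n^'n"
  have vw: "(\<Sum>i\<in>UNIV. v$i * w$i ^ k) = poly p (x ^ k)" for k
    using poly_eq_sum_bij_index[OF e deg, of "x ^ k"]
    by (simp add: v_def w_def power_mult[symmetric] mult.commute)
  have entry: "0 < t * w$i * w$l" "t * w$i * w$l < R" for i l
  proof -
    have w: "0 < w$i" "w$i \<le> 1" for i
      using x by (auto simp: w_def power_le_one)
    have "t * (w$i * w$l) \<le> t"
      using t(1) w[of i] w[of l] by (intro mult_left_le mult_le_one) auto
    hence "t * w$i * w$l \<le> t"
      by (simp only: mult.assoc)
    thus "t * w$i * w$l < R"
      using t by linarith
    show "0 < t * w$i * w$l"
      using t w[of i] w[of l] by simp
  qed
  have "summable (\<lambda>k. c k * (t * w$i * w$l) ^ k)" for i l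
    using entry[of i l] by (intro powser_inside[OF R]) simp
  hence "(\<lambda>k. c k * t ^ k * (\<Sum>i\<in>UNIV. v$i * w$i ^ k)\<^sup>2) sums
      (v \<bullet> (entrywise (\<lambda>s. \<Sum>k. c k * s ^ k) ?A *v v))"
    by (rule entrywise_powser_scaled_outer_quadratic_form)
  hence sums: "(\<lambda>k. c k * (poly p (x ^ k))\<^sup>2 * t ^ k) sums
      (v \<bullet> (entrywise (\<lambda>s. \<Sum>k. c k * s ^ k) ?A *v v))"
    by (simp add: vw mult_ac)
  have "?A \<in> P1 {s. 0 < s \<and> s < R}"
    using t entry by (intro scaled_outer_in_P1) auto
  hence "0 \<le> v \<bullet> (entrywise (\<lambda>s. \<Sum>k. c k * s ^ k) ?A *v v)"
    using psd unfolding psd_def by blast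
  thus ?thesis
    using sums_unique[OF sums] by simp
qed

lemma psd_entrywise_powser_coeff_poly_nonneg:
  fixes c :: "nat \<Rightarrow> real" and p :: "real poly"
  assumes R: "0 < R" "summable (\<lambda>k. c k * R ^ k)"
    and psd: "\<And>A::real^'n^'n. A \<in> P1 {s. 0 < s \<and> s < R} \<Longrightarrow>
           psd (entrywise (\<lambda>s. \<Sum>k. c k * s ^ k) A)"
    and deg: "degree p < CARD('n)"
    and x: "0 < x" "x \<le> 1"
    and vanish: "\<And>k. k < j \<Longrightarrow> c k * poly p (x ^ k) = 0"
  shows "0 \<le> c j * (poly p (x ^ j))\<^sup>2"
proof (rule powser_lowest_coeff_nonneg[where b = "\<lambda>k. c k * (poly p (x ^ k))\<^sup>2" and K = "R / 2"])
  let ?G = "(\<Sum>d\<le>degree p. \<bar>coeff p d\<bar>)\<^sup>2"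
  have bound: "(poly p (x ^ k))\<^sup>2 \<le> ?G" for k
    using power_mono[OF abs_poly_le_sum_abs_coeff[of "x ^ k" p] abs_ge_zero, of 2] x
    by (simp add: power_le_one)
  have "summable (\<lambda>k. ?G * \<bar>c k * (R / 2) ^ k\<bar>)"
    using powser_insidea[OF R(2), of "R / 2"] R(1) by (intro summable_mult) simp
  moreover have "norm (c k * (poly p (x ^ k))\<^sup>2 * (R / 2) ^ k) \<le> ?G * \<bar>c k * (R / 2) ^ k\<bar>" for k
    using mult_right_mono[OF bound abs_ge_zero, of k "c k * (R / 2) ^ k"]
    by (simp add: abs_mult mult_ac)
  ultimately show "summable (\<lambda>k. c k * (poly p (x ^ k))\<^sup>2 * (R / 2) ^ k)"
    by (rule summable_comparison_test')
  show "\<forall>\<^sub>F t in at_right 0. 0 \<le> (\<Sum>k. c k * (poly p (x ^ k))\<^sup>2 * t ^ k)"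
    using R(1) psd_entrywise_powser_imp_poly_weighted_powser_nonneg[OF R(2) psd deg x]
    by (intro eventually_at_rightI[of 0 R]) auto
qed (use R(1) vanish in auto)

lemma exists_poly_vanishing_at_earlier_powers:
  fixes c :: "nat \<Rightarrow> real"
  assumes x: "0 < x" "x < 1"
  obtains p :: "real poly" where "degree p \<le> card {k. k < j \<and> c k \<noteq> 0}"
    and "\<And>k. k < j \<Longrightarrow> c k * poly p (x ^ k) = 0" and "poly p (x ^ j) \<noteq> 0"
proof -
  define Z where "Z = (\<lambda>k. x ^ k) ` {k. k < j \<and> c k \<noteq> 0}"
  have "x ^ j \<noteq> x ^ k" if "k < j" for k
    using power_strict_decreasing_iff[OF x, of j k] that by linarith
  hence "x ^ j \<notin> Z"
    unfolding Z_def by blast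
  moreover have "finite Z"
    by (simp add: Z_def)
  ultimately obtain p where p: "degree p = card Z" "\<forall>z\<in>Z. poly p z = 0" "poly p (x ^ j) \<noteq> 0"
    using exists_poly_vanishing_on_nonzero_at by blast
  have "card Z \<le> card {k. k < j \<and> c k \<noteq> 0}"
    unfolding Z_def by (rule card_image_le) simp
  with p show ?thesis
    by (intro that) (auto simp: Z_def)
qed

theorem lemma1p3:
  fixes c :: "nat \<Rightarrow> real" and \<rho> :: ereal and N :: nat
  assumes "0 < \<rho>"
    and "\<And>z::complex. ereal (norm z) < \<rho> \<Longrightarrow> summable (\<lambda>k. complex_of_real (c k) * z ^ k)"
    and "CARD('n::finite) = N"
    and "\<And>A::real^'n^'n. A \<in> P1 {x. 0 < x \<and> ereal x < \<rho>} \<Longrightarrow>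
           psd (entrywise (\<lambda>x. \<Sum>k. c k * x ^ k) A)"
  shows "\<forall>j. c j \<noteq> 0 \<and> card {k. k < j \<and> c k \<noteq> 0} < N \<longrightarrow> 0 < c j"
proof (intro allI impI, elim conjE)
  fix j assume cj: "c j \<noteq> 0" and few: "card {k. k < j \<and> c k \<noteq> 0} < N"
  obtain R where R: "0 < R" "ereal R < \<rho>"
    using ereal_dense2[OF assms(1)] by (auto simp: zero_ereal_def)
  have "summable (\<lambda>k. complex_of_real (c k * R ^ k))"
    using assms(2)[of "complex_of_real R"] R by simp
  hence summable: "summable (\<lambda>k. c k * R ^ k)"
    by (simp only: summable_of_real_iff)
  have "P1 {s. 0 < s \<and> s < R} \<subseteq> P1 {s. 0 < s \<and> ereal s < \<rho>}"
    by (intro P1_mono) (auto intro: order.strict_trans[OF _ R(2)])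
  hence psd: "\<And>A::real^'n^'n. A \<in> P1 {s. 0 < s \<and> s < R} \<Longrightarrow>
      psd (entrywise (\<lambda>s. \<Sum>k. c k * s ^ k) A)"
    using assms(4) by blast
  obtain p :: "real poly" where p: "degree p \<le> card {k. k < j \<and> c k \<noteq> 0}"
      "\<And>k. k < j \<Longrightarrow> c k * poly p ((1/2) ^ k) = 0" "poly p ((1/2) ^ j) \<noteq> 0"
    using exists_poly_vanishing_at_earlier_powers[of "1/2"] by auto
  have "0 \<le> c j * (poly p ((1/2) ^ j))\<^sup>2"
    using p(1) few assms(3)
    by (intro psd_entrywise_powser_coeff_poly_nonneg[OF R(1) summable psd _ _ _ p(2)]) auto
  thus "0 < c j"
    using cj p(3) by (simp add: zero_le_mult_iff)
qed

end
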